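(* Let $p$ be a prime, $n$ a non-negative integer and $A_*$ a graded commutative algebra over $\mathbb F_p$. Then $\Gamma_{n+1}(G_{p,n}(A_* ))=\{X\}$, i.e. the lower central series $G_{p,n}(A_* )\supset\Gamma_1(G_{p,n}(A_* ))\supset\cdots\supset\Gamma_{n+1}(G_{p,n}(A_* ))$ terminates in the trivial group. If $p$ is odd, then moreover $\Gamma_{n}(G_{p,n}^{ev}(A_* ))=\{X\}$.
   Context: Graded commutative means $ab=(-1)^{\deg a\deg b}ba$. If $p=2$, $G_2(A_* )$ is the set of power series $\alpha(X)=\sum_{i\ge0}\alpha_iX^{2^i}\in A_*[[X]]$ ($X$ of degree $-1$) with $\alpha_i\in A_{2^i-1}$ and $\alpha_0=1$. If $p$ is odd, let $\epsilon$ have degree $-1$ with $\epsilon^2=0$, $X$ degree $-2$, and $G_p(A_* )$ is the set of $\alpha(X)=\sum_{i\ge0}\alpha_iX^{p^i}\in (A_*\otimes_{\mathbb F_p}\mathbb F_p[\epsilon]/(\epsilon^2))[[X]]$ with $\alpha_i$ homogeneous of degree $2(p^i-1)$ and $\alpha_0-1\in(\epsilon)$; $G_p^{ev}(A_* )$ is the subgroup of those $\alpha$ with all $\alpha_i\in A_*$ and $\alpha_0=1$. The group law is $\alpha(X)\cdot\beta(X)=\beta(\alpha(X))$ (coefficient of $X^{p^i}$ equal to $\sum_{j=0}^i\alpha_{i-j}^{p^j}\beta_j$); the identity is $X$. $G_{p,n}(A_* )$ is the subgroup of $G_p(A_* )$ consisting of $\alpha(X)=\sum_i\alpha_iX^{p^i}$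 with $\alpha_i^{p^{n-i+1}}=0$ for $i=1,\dots,n$ and $\alpha_i=0$ for $i\ge n+1$, and for odd $p$, $G_{p,n}^{ev}(A_* )=G_{p,n}(A_* )\cap G_p^{ev}(A_* )$. For a group $G$, $\Gamma_0(G)=G$ and $\Gamma_{k+1}(G)=[\Gamma_k(G),G]$. *)

theory Defs
  imports "HOL-Algebra.Generated_Groups" "HOL-Computational_Algebra.Primes"
begin

text \<open>A graded algebra A_* over F_p is modelled as a (not necessarily commutative)
 ring type 'a with p * 1 = 0, together with its homogeneous pieces
 Ahom d (d an integer degree); A is the internal direct sum of the Ahom d.\<close>

definition graded_comm_algebra :: "nat \<Rightarrow> (int \<Rightarrow> 'a::ring_1 set) \<Rightarrow> bool" where
  "graded_comm_algebra p Ahom \<longleftrightarrow>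
     of_nat p = (0::'a) \<and>
     (\<forall>d. 0 \<in> Ahom d \<and> (\<forall>x\<in>Ahom d. \<forall>y\<in>Ahom d. x + y \<in> Ahom d \<and> - x \<in> Ahom d)) \<and>
     1 \<in> Ahom 0 \<and>
     (\<forall>d e. \<forall>x\<in>Ahom d. \<forall>y\<in>Ahom e. x * y \<in> Ahom (d + e)) \<and>
     (\<forall>d e. \<forall>x\<in>Ahom d. \<forall>y\<in>Ahom e. x * y = (-1) ^ nat \<bar>d * e\<bar> * (y * x)) \<and>
     (\<forall>x::'a. \<exists>!c::int \<Rightarrow> 'a. finite {d. c d \<noteq> 0} \<and> (\<forall>d. c d \<in> Ahom d) \<and>
                         x = sum c {d. c d \<noteq> 0})"

text \<open>An element a + \<epsilon> b is encoded as the pair (a, b).  All coefficients that get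
 multiplied in the group law have even total degree, i.e. a has even degree, and
 on such elements the graded tensor product is (a,b)(a',b') = (aa', ab' + ba').\<close>

definition dmult :: "'a::ring_1 \<times> 'a \<Rightarrow> 'a \<times> 'a \<Rightarrow> 'a \<times> 'a" where
  "dmult x y = (fst x * fst y, fst x * snd y + snd x * fst y)"

primrec dpow :: "'a::ring_1 \<times> 'a \<Rightarrow> nat \<Rightarrow> 'a \<times> 'a" where
  "dpow x 0 = (1, 0)"
| "dpow x (Suc m) = dmult x (dpow x m)"

text \<open>Power series \<alpha>(X) = \<Sum>_i \<alpha>_i X^(p^i) are encoded by their coefficient sequences.
 For p = 2 the \<epsilon>-parts are required to vanish (then coefficients lie in A_*).\<close>

type_synonym 'a pseries = "nat \<Rightarrow> 'a \<times> 'a"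

definition Xser :: "'a::ring_1 pseries" where
  "Xser = (\<lambda>i. if i = 0 then (1, 0) else (0, 0))"

text \<open>Group law: \<alpha>\<cdot>\<beta> = \<beta>(\<alpha>(X)), coefficient of X^(p^i) is \<Sum>_j \<alpha>_(i-j)^(p^j) \<beta>_j.\<close>
definition gmult :: "nat \<Rightarrow> 'a::ring_1 pseries \<Rightarrow> 'a pseries \<Rightarrow> 'a pseries" where
  "gmult p \<alpha> \<beta> = (\<lambda>i.
     ((\<Sum>j\<le>i. fst (dmult (dpow (\<alpha> (i - j)) (p ^ j)) (\<beta> j))),
      (\<Sum>j\<le>i. snd (dmult (dpow (\<alpha> (i - j)) (p ^ j)) (\<beta> j)))))"

definition coeff_deg :: "nat \<Rightarrow> nat \<Rightarrow> int" where
  "coeff_deg p i = (if p = 2 then int (2 ^ i) - 1 else 2 * (int (p ^ i) - 1))"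

text \<open>For p = 2: \<alpha>_i \<in> A_(2^i-1), \<alpha>_0 = 1.  For p odd: \<alpha>_i = a_i + \<epsilon> b_i
 homogeneous of degree 2(p^i-1), i.e. a_i \<in> A_(2(p^i-1)), b_i \<in> A_(2(p^i-1)+1)
 (\<epsilon> has degree -1), and \<alpha>_0 - 1 \<in> (\<epsilon>), i.e. a_0 = 1.\<close>
definition Gp :: "nat \<Rightarrow> (int \<Rightarrow> 'a::ring_1 set) \<Rightarrow> 'a pseries set" where
  "Gp p Ahom = {\<alpha>. fst (\<alpha> 0) = 1 \<and>
      (\<forall>i. fst (\<alpha> i) \<in> Ahom (coeff_deg p i)) \<and>
      (if p = 2 then (\<forall>i. snd (\<alpha> i) = 0) else (\<forall>i. snd (\<alpha> i) \<in> Ahom (coeff_deg p i + 1)))}"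

definition Gp_ev :: "nat \<Rightarrow> (int \<Rightarrow> 'a::ring_1 set) \<Rightarrow> 'a pseries set" where
  "Gp_ev p Ahom = {\<alpha> \<in> Gp p Ahom. \<forall>i. snd (\<alpha> i) = 0}"

definition Gpn :: "nat \<Rightarrow> (int \<Rightarrow> 'a::ring_1 set) \<Rightarrow> nat \<Rightarrow> 'a pseries set" where
  "Gpn p Ahom n = {\<alpha> \<in> Gp p Ahom.
      (\<forall>i. 1 \<le> i \<and> i \<le> n \<longrightarrow> dpow (\<alpha> i) (p ^ (n - i + 1)) = (0, 0)) \<and>
      (\<forall>i. n + 1 \<le> i \<longrightarrow> \<alpha> i = (0, 0))}"

definition Gpn_ev :: "nat \<Rightarrow> (int \<Rightarrow> 'a::ring_1 set) \<Rightarrow> nat \<Rightarrow> 'a pseries set" where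
  "Gpn_ev p Ahom n = Gpn p Ahom n \<inter> Gp_ev p Ahom"

definition grp :: "nat \<Rightarrow> 'a::ring_1 pseries set \<Rightarrow> 'a pseries monoid" where
  "grp p S = \<lparr>carrier = S, monoid.mult = gmult p, one = Xser\<rparr>"

fun lcs :: "('g, 'b) monoid_scheme \<Rightarrow> nat \<Rightarrow> 'g set" where
  "lcs G 0 = carrier G"
| "lcs G (Suc k) = generate G
     {x \<otimes>\<^bsub>G\<^esub> y \<otimes>\<^bsub>G\<^esub> inv\<^bsub>G\<^esub> x \<otimes>\<^bsub>G\<^esub> inv\<^bsub>G\<^esub> y | x y. x \<in> lcs G k \<and> y \<in> carrier G}"

end

theory Submission
  imports Defs
begin

text \<open>
  Let F_k be the set of series congruent to X modulo X^(p^(k+1)) and eps X^(p^k).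
  The coefficients of even degree are central, so the Frobenius is additive on them. This makes
  the composition law associative, and it shows that composing with an element of F_k changes a
  series only by adding to its coefficient of X^(p^(k+1)) and to its eps-part at X^(p^k).
  Hence F_k commutes with everything modulo F_(k+1), which gives Gamma_k \<subseteq> F_k; and
  alpha^p \<in> F_(k+1) for alpha \<in> F_k, so alpha^(p^(n+1)) = X on G_(p,n), which makes this monoid a
  group. Finally F_(n+1) meets G_(p,n) only in X by truncation, and F_n meets G^ev_(p,n) only in X
  because even series have no eps-part.
\<close>

section \<open>Central elements and the Frobenius\<close>

definition central :: "'a::ring_1 \<Rightarrow> bool" where
  "central x \<longleftrightarrow> (\<forall>y. x * y = y * x)"

lemma central_commute: "central x \<Longrightarrow> x * y = y * x"
  by (simp add: central_def)

lemma central_0 [simp]: "central 0"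
  and central_1 [simp]: "central 1"
  and central_of_nat [simp]: "central (of_nat n)"
  by (simp_all add: central_def mult_of_nat_commute)

lemma central_add: "central x \<Longrightarrow> central y \<Longrightarrow> central (x + y)"
  by (simp add: central_def distrib_left distrib_right)

lemma central_diff: "central x \<Longrightarrow> central y \<Longrightarrow> central (x - y)"
  by (simp add: central_def left_diff_distrib right_diff_distrib)

lemma central_uminus: "central x \<Longrightarrow> central (- x)"
  by (simp add: central_def)

lemma central_mult: "central x \<Longrightarrow> central y \<Longrightarrow> central (x * y)"
  unfolding central_def by (metis mult.assoc)

lemma central_power: "central x \<Longrightarrow> central (x ^ n)"
  by (induction n) (simp_all add: central_mult)

lemma central_sum: "(\<And>j. j \<in> A \<Longrightarrow> central (f j)) \<Longrightarrow> central (sum f A)"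
  by (induction A rule: infinite_finite_induct) (simp_all add: central_add)

lemma power_mult_central:
  assumes "central x"
  shows "(x * y) ^ n = x ^ n * y ^ n"
proof (induction n)
  case (Suc n)
  have "(x * y) ^ Suc n = x * (y * x ^ n) * y ^ n"
    by (simp add: Suc mult.assoc)
  also have "y * x ^ n = x ^ n * y"
    using central_commute[OF central_power[OF assms]] by simp
  finally show ?case
    by (simp add: mult.assoc power_Suc2)
qed simp

text \<open>The centre is a commutative ring, in which the library's freshman's dream applies.\<close>

typedef (overloaded) 'a center = "{x::'a::ring_1. central x}"
  morphisms of_center Abs_center
  by (rule exI[of _ 0]) simp

lemma central_of_center: "central (of_center x)"
  using of_center[of x] by simp

instantiation center :: (ring_1) comm_ring_1
begin

definition "0 = Abs_center 0"
definition "1 = Abs_center 1"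
definition "x + y = Abs_center (of_center x + of_center y)"
definition "x - y = Abs_center (of_center x - of_center y)"
definition "- x = Abs_center (- of_center x)"
definition "x * y = Abs_center (of_center x * of_center y)"

lemma of_center_0: "of_center 0 = 0"
  and of_center_1: "of_center 1 = 1"
  and of_center_add: "of_center (x + y) = of_center x + of_center y"
  and of_center_diff: "of_center (x - y) = of_center x - of_center y"
  and of_center_uminus: "of_center (- x) = - of_center x"
  and of_center_mult: "of_center (x * y) = of_center x * of_center y"
  by (simp_all add: zero_center_def one_center_def plus_center_def minus_center_def
      uminus_center_def times_center_def Abs_center_inverse central_of_center
      central_add central_diff central_uminus central_mult)

instance
proof
  fix a b c :: "'a center"
  note of_center_simps = of_center_inject[symmetric] of_center_0 of_center_1 of_center_add
    of_center_diff of_center_uminus of_center_mult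
  show "a * b = b * a"
    using central_commute[OF central_of_center[of a]] by (simp add: of_center_simps)
  show "a * b * c = a * (b * c)"
    by (simp add: of_center_simps mult.assoc)
  show "1 * a = a" "0 + a = a" "- a + a = 0" "a - b = a + - b"
    by (simp_all add: of_center_simps)
  show "(a + b) * c = a * c + b * c"
    by (simp add: of_center_simps distrib_right)
  show "a + b + c = a + (b + c)" "a + b = b + a"
    by (simp_all add: of_center_simps add_ac)
  show "(0::'a center) \<noteq> 1"
    by (metis of_center_0 of_center_1 zero_neq_one)
qed

end

lemma of_center_of_nat: "of_center (of_nat n) = of_nat n"
  by (induction n) (simp_all add: of_center_0 of_center_1 of_center_add)

lemma of_center_power: "of_center (x ^ n) = of_center x ^ n"
  by (induction n) (simp_all add: of_center_1 of_center_mult)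

lemma of_center_sum: "of_center (sum f A) = (\<Sum>j\<in>A. of_center (f j))"
  by (induction A rule: infinite_finite_induct) (simp_all add: of_center_0 of_center_add)

lemma CHAR_center:
  assumes "prime p" "of_nat p = (0::'a::ring_1)"
  shows "CHAR('a center) = p"
proof -
  have "of_nat p = (0::'a center)"
    using assms(2) by (simp add: of_center_inject[symmetric] of_center_of_nat of_center_0)
  then have "CHAR('a center) dvd p"
    by (simp add: of_nat_eq_0_iff_char_dvd)
  moreover have "CHAR('a center) \<noteq> 1"
    by (metis of_nat_1 of_nat_CHAR one_neq_zero)
  ultimately show ?thesis
    using assms(1) by (metis prime_nat_iff)
qed

lemma frobenius_sum_central:
  fixes f :: "'b \<Rightarrow> 'a::ring_1"
  assumes "prime p" "of_nat p = (0::'a)" "\<And>j. j \<in> A \<Longrightarrow> central (f j)"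
  shows "sum f A ^ p ^ e = (\<Sum>j\<in>A. f j ^ p ^ e)"
proof -
  have f: "of_center (Abs_center (f j)) = f j" if "j \<in> A" for j
    using assms(3)[OF that] by (simp add: Abs_center_inverse)
  have "sum f A ^ p ^ e = of_center ((\<Sum>j\<in>A. Abs_center (f j)) ^ p ^ e)"
    by (simp add: of_center_power of_center_sum f)
  also have "\<dots> = of_center (\<Sum>j\<in>A. Abs_center (f j) ^ p ^ e)"
    using CHAR_center[OF assms(1,2)] assms(1) by (simp add: freshmans_dream_sum')
  also have "\<dots> = (\<Sum>j\<in>A. f j ^ p ^ e)"
    by (simp add: of_center_sum of_center_power f)
  finally show ?thesis .
qed

lemma (in group) commutator_mult_swap:
  assumes "x \<in> carrier G" "y \<in> carrier G"
  shows "x \<otimes> y \<otimes> inv x \<otimes> inv y \<otimes> (y \<otimes> x) = x \<otimes> y"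
proof -
  have "inv y \<otimes> (y \<otimes> x) = x"
    using assms by (simp add: m_assoc[symmetric])
  then show ?thesis
    using assms by (simp add: m_assoc)
qed

lemma (in monoid) group_if_nat_pow_eq_one:
  assumes "0 < (N :: nat)" "\<And>x. x \<in> carrier G \<Longrightarrow> x [^] N = \<one>"
  shows "group G"
proof (rule group_l_invI)
  fix x
  assume x: "x \<in> carrier G"
  have "x [^] (N - 1) \<otimes> x = x [^] N"
    using assms(1) by (simp flip: nat_pow_Suc)
  then show "\<exists>y\<in>carrier G. y \<otimes> x = \<one>"
    using assms(2) x by (metis nat_pow_closed)
qed

lemma one_mem_lcs: "group G \<Longrightarrow> \<one>\<^bsub>G\<^esub> \<in> lcs G k"
  by (cases k) (auto intro: generate.one group.is_monoid)

lemma fst_dmult [simp]: "fst (dmult x y) = fst x * fst y"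
  and snd_dmult [simp]: "snd (dmult x y) = fst x * snd y + snd x * fst y"
  by (simp_all add: dmult_def)

lemma fst_dpow [simp]: "fst (dpow x m) = fst x ^ m"
  by (induction m) simp_all

lemma snd_dpow:
  assumes "central (fst x)"
  shows "snd (dpow x m) = of_nat m * fst x ^ (m - 1) * snd x"
proof (induction m)
  case (Suc m)
  have "snd (dpow x (Suc m)) = fst x * (of_nat m * fst x ^ (m - 1) * snd x) + snd x * fst x ^ m"
    using Suc by simp
  also have "fst x * (of_nat m * fst x ^ (m - 1) * snd x) = of_nat m * (fst x * fst x ^ (m - 1)) * snd x"
    by (metis mult.assoc mult_of_nat_commute)
  also have "of_nat m * (fst x * fst x ^ (m - 1)) = of_nat m * fst x ^ m"
    by (cases m) simp_all
  also have "snd x * fst x ^ m = fst x ^ m * snd x"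
    using central_commute[OF central_power[OF assms]] by simp
  finally show ?case
    by (simp add: algebra_simps)
qed simp

lemma fst_gmult: "fst (gmult p \<alpha> \<beta> i) = (\<Sum>j\<le>i. fst (\<alpha> (i - j)) ^ p ^ j * fst (\<beta> j))"
  by (simp add: gmult_def)

lemma fst_gmult_0: "fst (gmult p c v 0) = fst (c 0) * fst (v 0)"
  by (simp add: fst_gmult)

lemma fst_Xser: "fst (Xser k) = (if k = 0 then 1 else 0)"
  and snd_Xser [simp]: "snd (Xser k) = 0"
  by (simp_all add: Xser_def)

definition unital_central :: "'a::ring_1 pseries set" where
  "unital_central = {\<alpha>. fst (\<alpha> 0) = 1 \<and> (\<forall>k. central (fst (\<alpha> k)))}"

lemma unital_centralD:
  "\<alpha> \<in> unital_central \<Longrightarrow> fst (\<alpha> 0) = 1"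
  "\<alpha> \<in> unital_central \<Longrightarrow> central (fst (\<alpha> k))"
  by (simp_all add: unital_central_def)

lemma Xser_unital_central: "Xser \<in> unital_central"
  by (simp add: unital_central_def fst_Xser)

lemma gmult_unital_central:
  "\<alpha> \<in> unital_central \<Longrightarrow> \<beta> \<in> unital_central \<Longrightarrow> gmult p \<alpha> \<beta> \<in> unital_central"
  by (auto simp: unital_central_def gmult_def intro!: central_sum central_mult central_power)

lemma grp_simps [simp]:
  "carrier (grp p S) = S" "monoid.mult (grp p S) = gmult p" "one (grp p S) = Xser"
  by (simp_all add: grp_def)

lemma nat_pow_unital_central:
  "x \<in> unital_central \<Longrightarrow> x [^]\<^bsub>grp p S\<^esub> (m :: nat) \<in> unital_central"
  by (induction m) (simp_all add: Xser_unital_central gmult_unital_central)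

lemma sum_atMost_triangle_swap:
  fixes g :: "nat \<Rightarrow> nat \<Rightarrow> 'b::comm_monoid_add"
  shows "(\<Sum>m\<le>i. \<Sum>j\<le>m. g m j) = (\<Sum>j\<le>i. \<Sum>l\<le>i - j. g (l + j) j)"
proof (induction i)
  case (Suc i)
  have "(\<Sum>j\<le>i. \<Sum>l\<le>Suc i - j. g (l + j) j) = (\<Sum>j\<le>i. (\<Sum>l\<le>i - j. g (l + j) j) + g (Suc i) j)"
    by (intro sum.cong) (simp_all add: Suc_diff_le)
  then show ?case
    using Suc by (simp add: sum.distrib add_ac)
qed simp

lemma sum_atMost_endpoints:
  fixes f :: "nat \<Rightarrow> 'b::comm_monoid_add"
  assumes "0 < i" "\<And>j. 0 < j \<Longrightarrow> j < i \<Longrightarrow> f j = 0"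
  shows "(\<Sum>j\<le>i. f j) = f 0 + f i"
proof -
  have "(\<Sum>j\<le>i. f j) = (\<Sum>j\<in>{0, i}. f j)"
    using assms by (intro sum.mono_neutral_right) auto
  then show ?thesis
    using assms(1) by simp
qed

lemma coeff_deg_add:
  assumes "j \<le> i"
  shows "int (p ^ j) * coeff_deg p (i - j) + coeff_deg p j = coeff_deg p i"
proof -
  have "q ^ i = q ^ j * q ^ (i - j)" for q :: nat
    using assms by (simp flip: power_add)
  then show ?thesis
    unfolding coeff_deg_def by (simp add: algebra_simps)
qed

lemma Gpn_Gp: "\<alpha> \<in> Gpn p Ahom n \<Longrightarrow> \<alpha> \<in> Gp p Ahom"
  by (simp add: Gpn_def)

section \<open>The filtration by order of contact with X\<close>

text \<open>\<open>agree_upto m u v\<close> says that \<open>u \<equiv> v\<close> modulo \<open>X\<^bsup>p^(m+1)\<^esup>\<close> and \<open>\<epsilon> X\<^bsup>p^m\<^esup>\<close>.\<close>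

definition agree_upto :: "nat \<Rightarrow> 'a::ring_1 pseries \<Rightarrow> 'a pseries \<Rightarrow> bool" where
  "agree_upto m u v \<longleftrightarrow> (\<forall>i\<le>m. fst (u i) = fst (v i)) \<and> (\<forall>i<m. snd (u i) = snd (v i))"

definition filtration :: "nat \<Rightarrow> 'a::ring_1 pseries set" where
  "filtration k = {w. agree_upto k w Xser}"

lemma agree_upto_sym: "agree_upto m u v \<Longrightarrow> agree_upto m v u"
  by (simp add: agree_upto_def)

lemma agree_upto_trans: "agree_upto m u v \<Longrightarrow> agree_upto m v w \<Longrightarrow> agree_upto m u w"
  by (simp add: agree_upto_def)

lemma filtration_iff:
  assumes "w \<in> unital_central"
  shows "w \<in> filtration k \<longleftrightarrow> (\<forall>i. 1 \<le> i \<and> i \<le> k \<longrightarrow> fst (w i) = 0) \<and> (\<forall>i<k. snd (w i) = 0)"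
  using unital_centralD(1)[OF assms] by (auto simp: filtration_def agree_upto_def fst_Xser)

lemma Xser_filtration: "Xser \<in> filtration k"
  by (simp add: filtration_def agree_upto_def)

section \<open>Composition in characteristic p\<close>

context
  fixes p :: nat
  assumes prime_p: "prime p" and char_p: "of_nat p = (0::'a::ring_1)"
begin

lemma snd_dpow_prime_power:
  "central (fst x) \<Longrightarrow> 0 < e \<Longrightarrow> snd (dpow (x::'a \<times> 'a) (p ^ e)) = 0"
  by (simp add: snd_dpow char_p zero_power)

lemma dpow_prime_power_eq_0_iff:
  "central (fst x) \<Longrightarrow> 0 < e \<Longrightarrow> dpow (x::'a \<times> 'a) (p ^ e) = (0, 0) \<longleftrightarrow> fst x ^ p ^ e = 0"
  by (simp add: prod_eq_iff snd_dpow_prime_power)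

lemma snd_gmult:
  assumes "\<And>k. central (fst (\<alpha> k))"
  shows "snd (gmult p (\<alpha> :: 'a pseries) \<beta> i)
    = (\<Sum>j\<le>i. fst (\<alpha> (i - j)) ^ p ^ j * snd (\<beta> j)) + snd (\<alpha> i) * fst (\<beta> 0)"
proof -
  have "(\<Sum>j\<le>i. snd (dpow (\<alpha> (i - j)) (p ^ j)) * fst (\<beta> j))
      = snd (\<alpha> i) * fst (\<beta> 0) + (\<Sum>j<i. snd (dpow (\<alpha> (i - Suc j)) (p ^ Suc j)) * fst (\<beta> (Suc j)))"
    by (simp add: sum.atMost_shift)
  also have "(\<Sum>j<i. snd (dpow (\<alpha> (i - Suc j)) (p ^ Suc j)) * fst (\<beta> (Suc j))) = 0"
    using snd_dpow_prime_power[OF assms] by (simp del: power_Suc)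
  finally show ?thesis
    by (simp add: gmult_def sum.distrib)
qed

lemma sum_frobenius_assoc:
  fixes A B C :: "nat \<Rightarrow> 'a"
  assumes "\<And>k. central (A k)" "\<And>k. central (B k)"
  shows "(\<Sum>j\<le>i. (\<Sum>l\<le>i - j. A (i - j - l) ^ p ^ l * B l) ^ p ^ j * C j)
       = (\<Sum>m\<le>i. A (i - m) ^ p ^ m * (\<Sum>j\<le>m. B (m - j) ^ p ^ j * C j))"
proof -
  have "(\<Sum>l\<le>i - j. A (i - j - l) ^ p ^ l * B l) ^ p ^ j
      = (\<Sum>l\<le>i - j. A (i - (l + j)) ^ p ^ (l + j) * B l ^ p ^ j)" if "j \<le> i" for j
  proof -
    have "(\<Sum>l\<le>i - j. A (i - j - l) ^ p ^ l * B l) ^ p ^ j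
        = (\<Sum>l\<le>i - j. (A (i - j - l) ^ p ^ l * B l) ^ p ^ j)"
      using assms by (intro frobenius_sum_central[OF prime_p char_p]) (auto intro: central_mult central_power)
    then show ?thesis
      using assms(1) that
      by (simp add: power_mult_central central_power add.commute flip: power_mult power_add)
  qed
  then have "(\<Sum>j\<le>i. (\<Sum>l\<le>i - j. A (i - j - l) ^ p ^ l * B l) ^ p ^ j * C j)
      = (\<Sum>j\<le>i. \<Sum>l\<le>i - j. A (i - (l + j)) ^ p ^ (l + j) * (B l ^ p ^ j * C j))"
    by (simp add: sum_distrib_right mult.assoc)
  also have "\<dots> = (\<Sum>m\<le>i. \<Sum>j\<le>m. A (i - m) ^ p ^ m * (B (m - j) ^ p ^ j * C j))"
    by (simp add: sum_atMost_triangle_swap)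
  finally show ?thesis
    by (simp add: sum_distrib_left)
qed

lemma gmult_assoc:
  assumes "\<alpha> \<in> unital_central" "\<beta> \<in> unital_central"
  shows "gmult p (gmult p \<alpha> \<beta>) \<gamma> = gmult p \<alpha> (gmult p \<beta> (\<gamma> :: 'a pseries))"
proof (intro ext prod_eqI)
  fix i
  have cA: "\<And>k. central (fst (\<alpha> k))" and cB: "\<And>k. central (fst (\<beta> k))"
    and cAB: "\<And>k. central (fst (gmult p \<alpha> \<beta> k))"
    using assms gmult_unital_central by (auto simp: unital_central_def)
  have assoc: "(\<Sum>j\<le>i. fst (gmult p \<alpha> \<beta> (i - j)) ^ p ^ j * C j)
      = (\<Sum>m\<le>i. fst (\<alpha> (i - m)) ^ p ^ m * (\<Sum>j\<le>m. fst (\<beta> (m - j)) ^ p ^ j * C j))" for C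
    unfolding fst_gmult using sum_frobenius_assoc[OF cA cB] by simp
  show "fst (gmult p (gmult p \<alpha> \<beta>) \<gamma> i) = fst (gmult p \<alpha> (gmult p \<beta> \<gamma>) i)"
    unfolding fst_gmult[of p "gmult p \<alpha> \<beta>"] assoc by (simp only: fst_gmult)
  have "snd (gmult p (gmult p \<alpha> \<beta>) \<gamma> i)
      = (\<Sum>m\<le>i. fst (\<alpha> (i - m)) ^ p ^ m * (\<Sum>j\<le>m. fst (\<beta> (m - j)) ^ p ^ j * snd (\<gamma> j)))
        + ((\<Sum>m\<le>i. fst (\<alpha> (i - m)) ^ p ^ m * snd (\<beta> m)) + snd (\<alpha> i) * fst (\<beta> 0)) * fst (\<gamma> 0)"
    by (simp only: snd_gmult[OF cAB] assoc snd_gmult[OF cA])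
  also have "\<dots> = snd (gmult p \<alpha> (gmult p \<beta> \<gamma>) i)"
    by (simp add: snd_gmult[OF cA] snd_gmult[OF cB] fst_gmult distrib_left distrib_right
        sum.distrib sum_distrib_right mult.assoc add_ac)
  finally show "snd (gmult p (gmult p \<alpha> \<beta>) \<gamma> i) = snd (gmult p \<alpha> (gmult p \<beta> \<gamma>) i)" .
qed

lemma gmult_Xser_left: "gmult p Xser \<alpha> = (\<alpha> :: 'a pseries)"
proof (intro ext prod_eqI)
  fix i
  have "(\<Sum>j\<le>i. fst (Xser (i - j)) ^ p ^ j * z j) = z i" for z :: "nat \<Rightarrow> 'a"
  proof -
    have "(\<Sum>j\<le>i. fst (Xser (i - j)) ^ p ^ j * z j) = (\<Sum>j\<le>i. if j = i then z j else 0)"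
      using prime_gt_0_nat[OF prime_p] by (intro sum.cong) (auto simp: fst_Xser zero_power)
    then show ?thesis
      by simp
  qed
  then show "fst (gmult p Xser \<alpha> i) = fst (\<alpha> i)" "snd (gmult p Xser \<alpha> i) = snd (\<alpha> i)"
    by (simp_all add: fst_gmult snd_gmult fst_Xser)
qed

lemma gmult_Xser_right:
  assumes "\<alpha> \<in> unital_central"
  shows "gmult p \<alpha> Xser = (\<alpha> :: 'a pseries)"
proof (intro ext prod_eqI)
  fix i
  have "fst (\<alpha> (i - j)) ^ p ^ j * fst (Xser j) = (if j = 0 then fst (\<alpha> i) else 0)" for j
    by (simp add: fst_Xser)
  then show "fst (gmult p \<alpha> Xser i) = fst (\<alpha> i)" "snd (gmult p \<alpha> Xser i) = snd (\<alpha> i)"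
    using unital_centralD(2)[OF assms] by (simp_all add: fst_gmult snd_gmult fst_Xser)
qed

lemma monoid_grp:
  assumes "S \<subseteq> unital_central" "Xser \<in> S" "\<And>\<alpha> \<beta>. \<alpha> \<in> S \<Longrightarrow> \<beta> \<in> S \<Longrightarrow> gmult p \<alpha> \<beta> \<in> S"
  shows "monoid (grp p (S :: 'a pseries set))"
proof -
  have "\<alpha> \<in> unital_central" if "\<alpha> \<in> S" for \<alpha>
    using assms(1) that by blast
  then show ?thesis
    using assms(2,3) by unfold_locales (simp_all add: gmult_assoc gmult_Xser_left gmult_Xser_right)
qed

section \<open>Commutators and powers in the filtration\<close>

lemma fst_gmult_eq_add:
  assumes "0 < i" "fst (c 0) = 1" "fst (v 0) = 1"
    and "\<And>j. 0 < j \<Longrightarrow> j < i \<Longrightarrow> fst (c (i - j)) = 0 \<or> fst (v j) = 0"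
  shows "fst (gmult p c (v :: 'a pseries) i) = fst (c i) + fst (v i)"
proof -
  have "fst (c (i - j)) ^ p ^ j * fst (v j) = 0" if "0 < j" "j < i" for j
    using assms(4)[OF that] prime_gt_0_nat[OF prime_p] by (auto simp: zero_power)
  then show ?thesis
    unfolding fst_gmult using assms(1-3) by (subst sum_atMost_endpoints) simp_all
qed

lemma snd_gmult_eq_add:
  assumes "0 < i" "c \<in> unital_central" "fst (v 0) = 1"
    and "\<And>j. 0 < j \<Longrightarrow> j < i \<Longrightarrow> fst (c (i - j)) = 0 \<or> snd (v j) = 0"
  shows "snd (gmult p c (v :: 'a pseries) i) = fst (c i) * snd (v 0) + snd (v i) + snd (c i)"
proof -
  have "fst (c (i - j)) ^ p ^ j * snd (v j) = 0" if "0 < j" "j < i" for j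
    using assms(4)[OF that] prime_gt_0_nat[OF prime_p] by (auto simp: zero_power)
  then show ?thesis
    unfolding snd_gmult[OF unital_centralD(2)[OF assms(2)]]
    using assms(1,3) unital_centralD(1)[OF assms(2)] by (subst sum_atMost_endpoints) simp_all
qed

lemma snd_gmult_0:
  assumes "c \<in> unital_central" "fst (v 0) = 1"
  shows "snd (gmult p c (v :: 'a pseries) 0) = snd (v 0) + snd (c 0)"
  using assms unital_centralD[OF assms(1)] by (simp add: snd_gmult)

lemma agree_upto_gmult_if_filtration:
  assumes c: "c \<in> unital_central" "c \<in> filtration m" and v0: "fst (v 0) = 1"
  shows "agree_upto m (gmult p c v) (v :: 'a pseries)"
proof -
  have fst_c: "fst (c i) = 0" if "1 \<le> i" "i \<le> m" for i
    using that c filtration_iff by blast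
  have snd_c: "snd (c i) = 0" if "i < m" for i
    using that c filtration_iff by blast
  have "fst (gmult p c v i) = fst (v i) \<and> (i < m \<longrightarrow> snd (gmult p c v i) = snd (v i))"
    if "i \<le> m" for i
  proof (cases "i = 0")
    case True
    then show ?thesis
      using snd_gmult_0[of c v, OF c(1) v0] snd_c unital_centralD(1)[OF c(1)] v0
      by (simp add: fst_gmult_0)
  next
    case False
    then have "fst (c (i - j)) = 0" if "0 < j" "j < i" for j
      using fst_c \<open>i \<le> m\<close> that by simp
    then show ?thesis
      using fst_gmult_eq_add[of i c v] snd_gmult_eq_add[of i c v] False fst_c snd_c \<open>i \<le> m\<close>
        c(1) unital_centralD(1)[OF c(1)] v0
      by simp
  qed
  then show ?thesis
    by (simp add: agree_upto_def)
qed

lemma filtration_if_agree_upto_gmult: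
  assumes c: "c \<in> unital_central" and v0: "fst (v 0) = 1"
    and agree: "agree_upto m (gmult p c v) (v :: 'a pseries)"
  shows "c \<in> filtration m"
proof -
  have "(1 \<le> i \<longrightarrow> fst (c i) = 0) \<and> (i < m \<longrightarrow> snd (c i) = 0)" if "i \<le> m" for i
    using that
  proof (induction i rule: less_induct)
    case (less i)
    show ?case
    proof (cases "i = 0")
      case True
      then show ?thesis
        using agree snd_gmult_0[of c v, OF c v0] by (auto simp: agree_upto_def)
    next
      case False
      have below: "fst (c (i - j)) = 0" if "0 < j" "j < i" for j
        using less.IH[of "i - j"] less.prems that by simp
      have "fst (c i) = 0"
        using agree fst_gmult_eq_add[of i c v] below False less.prems unital_centralD(1)[OF c] v0
        by (auto simp: agree_upto_def)
      moreover have "i < m \<Longrightarrow> snd (c i) = 0"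
        using agree snd_gmult_eq_add[of i c v] below False c v0 \<open>fst (c i) = 0\<close>
        by (auto simp: agree_upto_def)
      ultimately show ?thesis
        by simp
    qed
  qed
  then show ?thesis
    using filtration_iff[OF c] by auto
qed

lemma gmult_filtration:
  assumes "c \<in> unital_central" "c \<in> filtration k" "v \<in> unital_central" "v \<in> filtration k"
  shows "gmult p c (v :: 'a pseries) \<in> filtration k"
  using agree_upto_gmult_if_filtration[of c k v, OF assms(1,2) unital_centralD(1)[OF assms(3)]] assms(4)
    agree_upto_trans
  by (auto simp: filtration_def)

lemma agree_upto_gmult_commute:
  assumes x: "x \<in> unital_central" "x \<in> filtration k" and y: "y \<in> unital_central"
  shows "agree_upto (Suc k) (gmult p x y) (gmult p y (x :: 'a pseries))"
proof -
  note x0 = unital_centralD(1)[OF x(1)] and y0 = unital_centralD(1)[OF y]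
  have fst_x: "fst (x i) = 0" if "1 \<le> i" "i \<le> k" for i
    using that x filtration_iff by blast
  have snd_x: "snd (x i) = 0" if "i < k" for i
    using that x filtration_iff by blast
  have "fst (gmult p x y i) = fst (gmult p y x i)" if "i \<le> Suc k" for i
  proof (cases "i = 0")
    case False
    then show ?thesis
      using fst_gmult_eq_add[of i x y] fst_gmult_eq_add[of i y x] fst_x that x0 y0
      by (simp add: add.commute)
  qed (simp add: fst_gmult_0 x0 y0)
  moreover have "snd (gmult p x y i) = snd (gmult p y x i)" if "i < Suc k" for i
  proof (cases "i = 0")
    case False
    then show ?thesis
      using snd_gmult_eq_add[of i x y] snd_gmult_eq_add[of i y x] fst_x snd_x that x y x0 y0
      by (simp add: add.commute)
  qed (simp add: snd_gmult_0[of x y] snd_gmult_0[of y x] x y x0 y0 add.commute)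
  ultimately show ?thesis
    by (simp add: agree_upto_def)
qed

lemma nat_pow_filtration_coeffs:
  assumes x: "x \<in> unital_central" "(x :: 'a pseries) \<in> filtration k"
  shows "x [^]\<^bsub>grp p S\<^esub> (m :: nat) \<in> filtration k
    \<and> fst ((x [^]\<^bsub>grp p S\<^esub> m) (Suc k)) = of_nat m * fst (x (Suc k))
    \<and> snd ((x [^]\<^bsub>grp p S\<^esub> m) k) = of_nat m * snd (x k)"
proof (induction m)
  case 0
  then show ?case
    by (simp add: Xser_filtration fst_Xser)
next
  case (Suc m)
  let ?u = "x [^]\<^bsub>grp p S\<^esub> m"
  have u: "?u \<in> unital_central"
    by (rule nat_pow_unital_central[OF x(1)])
  note x0 = unital_centralD(1)[OF x(1)] and u0 = unital_centralD(1)[OF u]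
  have fst_u: "fst (?u i) = 0" if "1 \<le> i" "i \<le> k" for i
    using Suc.IH filtration_iff[OF u] that by blast
  have "gmult p ?u x \<in> filtration k"
    using gmult_filtration u x Suc.IH by blast
  moreover have "fst (gmult p ?u x (Suc k)) = fst (?u (Suc k)) + fst (x (Suc k))"
    using fst_u by (intro fst_gmult_eq_add) (auto simp: x0 u0)
  moreover have "snd (gmult p ?u x k) = snd (?u k) + snd (x k)"
  proof (cases "k = 0")
    case True
    then show ?thesis
      using snd_gmult_0[of ?u x, OF u x0] by (simp add: add.commute)
  next
    case False
    then have "snd (gmult p ?u x k) = fst (?u k) * snd (x 0) + snd (x k) + snd (?u k)"
      using fst_u by (intro snd_gmult_eq_add u x0) auto
    then show ?thesis
      using fst_u[of k] False by (simp add: add.commute)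
  qed
  ultimately show ?case
    using Suc.IH by (simp add: algebra_simps)
qed

lemma nat_pow_prime_filtration:
  assumes x: "x \<in> unital_central" "(x :: 'a pseries) \<in> filtration k"
  shows "x [^]\<^bsub>grp p S\<^esub> p \<in> filtration (Suc k)"
  using nat_pow_filtration_coeffs[OF x, of S p] char_p
  unfolding filtration_iff[OF nat_pow_unital_central[OF x(1)]]
  by (auto simp: le_Suc_eq less_Suc_eq)

lemma nat_pow_prime_power_filtration:
  assumes "monoid (grp p S)" "S \<subseteq> (unital_central :: 'a pseries set)" "x \<in> S"
  shows "x [^]\<^bsub>grp p S\<^esub> (p ^ k) \<in> filtration k"
proof -
  have x: "x \<in> unital_central"
    using assms(2,3) by blast
  show ?thesis
  proof (induction k)
    case 0
    show ?case
      using x filtration_iff[of x 0] by (simp add: gmult_Xser_left)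
  next
    case (Suc k)
    have "x [^]\<^bsub>grp p S\<^esub> (p ^ Suc k) = (x [^]\<^bsub>grp p S\<^esub> (p ^ k)) [^]\<^bsub>grp p S\<^esub> p"
      using monoid.nat_pow_pow[OF assms(1)] assms(3) by (simp add: mult.commute)
    then show ?case
      using nat_pow_prime_filtration[OF nat_pow_unital_central[OF x] Suc] by simp
  qed
qed

lemma inv_filtration:
  assumes "group (grp p S)" "S \<subseteq> (unital_central :: 'a pseries set)" "h \<in> S" "h \<in> filtration k"
  shows "inv\<^bsub>grp p S\<^esub> h \<in> filtration k"
proof -
  interpret G: group "grp p S"
    by (rule assms(1))
  have "inv\<^bsub>grp p S\<^esub> h \<in> S"
    using G.inv_closed assms(3) by simp
  then have h_inv: "inv\<^bsub>grp p S\<^esub> h \<in> unital_central"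
    using assms(2) by blast
  have "agree_upto k (gmult p (inv\<^bsub>grp p S\<^esub> h) h) h"
    using G.l_inv[of h] assms(3,4) agree_upto_sym by (simp add: filtration_def)
  moreover have "fst (h 0) = 1"
    using assms(2,3) unital_centralD(1) by blast
  ultimately show ?thesis
    using filtration_if_agree_upto_gmult[OF h_inv] by blast
qed

text \<open>The commutator \<open>h\<close> of \<open>x\<close> and \<open>y\<close> satisfies \<open>h (y x) = x y\<close>, which agrees with \<open>y x\<close>.\<close>

lemma commutator_filtration:
  assumes "group (grp p S)" "S \<subseteq> (unital_central :: 'a pseries set)"
    and x: "x \<in> S" "x \<in> filtration k" and y: "y \<in> S"
  shows "x \<otimes>\<^bsub>grp p S\<^esub> y \<otimes>\<^bsub>grp p S\<^esub> inv\<^bsub>grp p S\<^esub> x \<otimes>\<^bsub>grp p S\<^esub> inv\<^bsub>grp p S\<^esub> y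
    \<in> S \<inter> filtration (Suc k)" (is "?h \<in> _")
proof -
  interpret G: group "grp p S"
    by (rule assms(1))
  have h_S: "?h \<in> S"
    using x y by (metis G.m_closed G.inv_closed grp_simps(1))
  then have h: "?h \<in> unital_central"
    using assms(2) by blast
  have x_uc: "x \<in> unital_central" and y_uc: "y \<in> unital_central"
    using assms(2) x y by blast+
  have "gmult p ?h (gmult p y x) = gmult p x y"
    using G.commutator_mult_swap[of x y] x y by simp
  moreover have "agree_upto (Suc k) (gmult p x y) (gmult p y x)"
    by (rule agree_upto_gmult_commute[OF x_uc x(2) y_uc])
  ultimately have "agree_upto (Suc k) (gmult p ?h (gmult p y x)) (gmult p y x)"
    by simp
  moreover have "fst (gmult p y x 0) = 1"
    using unital_centralD(1)[OF x_uc] unital_centralD(1)[OF y_uc] by (simp add: fst_gmult_0)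
  ultimately show ?thesis
    using filtration_if_agree_upto_gmult[OF h] h_S by blast
qed

lemma lcs_subset_filtration:
  assumes G: "group (grp p S)" and S: "S \<subseteq> (unital_central :: 'a pseries set)"
  shows "lcs (grp p S) k \<subseteq> S \<inter> filtration k"
proof (induction k)
  case 0
  show ?case
    using S filtration_iff by auto
next
  case (Suc k)
  interpret G: group "grp p S"
    by (rule G)
  have commutator: "x \<otimes>\<^bsub>grp p S\<^esub> y \<otimes>\<^bsub>grp p S\<^esub> inv\<^bsub>grp p S\<^esub> x \<otimes>\<^bsub>grp p S\<^esub> inv\<^bsub>grp p S\<^esub> y
      \<in> S \<inter> filtration (Suc k)" if "x \<in> lcs (grp p S) k" "y \<in> carrier (grp p S)" for x y
    using that Suc.IH by (intro commutator_filtration[OF G S]) auto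
  show ?case
  proof
    fix w
    assume "w \<in> lcs (grp p S) (Suc k)"
    then show "w \<in> S \<inter> filtration (Suc k)"
      unfolding lcs.simps
    proof (induction rule: generate.induct)
      case one
      show ?case
        using Xser_filtration G.one_closed by simp
    next
      case (incl h)
      then show ?case
        using commutator by blast
    next
      case (inv h)
      then have "h \<in> S" "h \<in> filtration (Suc k)"
        using commutator by blast+
      then show ?case
        using inv_filtration[OF G S] G.inv_closed by simp
    next
      case (eng h1 h2)
      then show ?case
        using gmult_filtration S G.m_closed by auto
    qed
  qed
qed

context
  fixes Ahom :: "int \<Rightarrow> 'a set"
  assumes graded: "graded_comm_algebra p Ahom"
begin

lemma homogeneous_0: "0 \<in> Ahom d"
  and homogeneous_add: "x \<in> Ahom d \<Longrightarrow> y \<in> Ahom d \<Longrightarrow> x + y \<in> Ahom d"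
  and homogeneous_1: "1 \<in> Ahom 0"
  and homogeneous_mult: "x \<in> Ahom d \<Longrightarrow> y \<in> Ahom e \<Longrightarrow> x * y \<in> Ahom (d + e)"
  and homogeneous_commute: "x \<in> Ahom d \<Longrightarrow> y \<in> Ahom e \<Longrightarrow> x * y = (-1) ^ nat \<bar>d * e\<bar> * (y * x)"
  using graded unfolding graded_comm_algebra_def by blast+

lemma homogeneous_decomposition:
  "\<exists>c. finite {d. c d \<noteq> 0} \<and> (\<forall>d. c d \<in> Ahom d) \<and> x = sum c {d. c d \<noteq> 0}"
  using graded unfolding graded_comm_algebra_def by (blast dest: ex1_implies_ex)

lemma homogeneous_sum: "(\<And>j. j \<in> A \<Longrightarrow> f j \<in> Ahom d) \<Longrightarrow> sum f A \<in> Ahom d"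
  by (induction A rule: infinite_finite_induct) (simp_all add: homogeneous_0 homogeneous_add)

lemma homogeneous_power: "x \<in> Ahom d \<Longrightarrow> x ^ m \<in> Ahom (int m * d)"
proof (induction m)
  case (Suc m)
  then have "x * x ^ m \<in> Ahom (d + int m * d)"
    by (intro homogeneous_mult)
  then show ?case
    by (simp add: algebra_simps)
qed (simp add: homogeneous_1)

lemma central_homogeneous:
  assumes "x \<in> Ahom d" "p = 2 \<or> even d"
  shows "central x"
  unfolding central_def
proof
  fix y
  obtain c where c: "\<forall>e. c e \<in> Ahom e" "y = sum c {e. c e \<noteq> 0}"
    using homogeneous_decomposition by blast
  have "x * c e = c e * x" for e
  proof -
    have "(-1::'a) ^ nat \<bar>d * e\<bar> = 1"
    proof (cases "p = 2")
      case True
      then have "(1::'a) + 1 = 0"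
        using char_p by (metis of_nat_numeral one_add_one)
      then show ?thesis
        by (metis add_eq_0_iff power_one)
    next
      case False
      then have "even (nat \<bar>d * e\<bar>)"
        using assms(2) by (simp add: even_nat_iff)
      then show ?thesis
        by simp
    qed
    then show ?thesis
      using homogeneous_commute[OF assms(1) c(1)[rule_format, of e]] by simp
  qed
  then show "x * y = y * x"
    unfolding c(2) sum_distrib_left sum_distrib_right by simp
qed

lemma Gp_unital_central:
  assumes "\<alpha> \<in> Gp p Ahom"
  shows "\<alpha> \<in> unital_central"
proof -
  have "central (fst (\<alpha> k))" for k
    using assms central_homogeneous[of "fst (\<alpha> k)" "coeff_deg p k"] by (simp add: Gp_def coeff_deg_def)
  then show ?thesis
    using assms by (simp add: Gp_def unital_central_def)
qed

lemma homogeneous_gmult_term: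
  assumes "\<alpha> \<in> Gp p Ahom" "j \<le> i" "z \<in> Ahom (coeff_deg p j + e)"
  shows "fst (\<alpha> (i - j)) ^ p ^ j * z \<in> Ahom (coeff_deg p i + e)"
proof -
  have "fst (\<alpha> (i - j)) ^ p ^ j * z \<in> Ahom (int (p ^ j) * coeff_deg p (i - j) + (coeff_deg p j + e))"
    using assms by (intro homogeneous_mult homogeneous_power) (simp_all add: Gp_def)
  then show ?thesis
    using coeff_deg_add[OF assms(2), of p] by (simp add: add.assoc[symmetric])
qed

lemma gmult_Gp:
  assumes \<alpha>: "\<alpha> \<in> Gp p Ahom" and \<beta>: "\<beta> \<in> Gp p Ahom"
  shows "gmult p \<alpha> \<beta> \<in> Gp p Ahom"
proof -
  have central_\<alpha>: "\<And>k. central (fst (\<alpha> k))"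
    using Gp_unital_central[OF \<alpha>] unital_centralD(2) by blast
  have "fst (gmult p \<alpha> \<beta> i) \<in> Ahom (coeff_deg p i)" for i
    unfolding fst_gmult using homogeneous_gmult_term[OF \<alpha>, where e = 0] \<beta>
    by (intro homogeneous_sum) (simp add: Gp_def)
  moreover have "snd (gmult p \<alpha> \<beta> i) = 0" if "p = 2" for i
    unfolding snd_gmult[OF central_\<alpha>] using \<alpha> \<beta> that by (simp add: Gp_def)
  moreover have "snd (gmult p \<alpha> \<beta> i) \<in> Ahom (coeff_deg p i + 1)" if "p \<noteq> 2" for i
    unfolding snd_gmult[OF central_\<alpha>]
  proof (intro homogeneous_add homogeneous_sum)
    show "fst (\<alpha> (i - j)) ^ p ^ j * snd (\<beta> j) \<in> Ahom (coeff_deg p i + 1)" if "j \<in> {..i}" for j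
      using homogeneous_gmult_term[OF \<alpha>, where e = 1] \<beta> \<open>p \<noteq> 2\<close> that by (simp add: Gp_def)
    show "snd (\<alpha> i) * fst (\<beta> 0) \<in> Ahom (coeff_deg p i + 1)"
      using homogeneous_mult[of "snd (\<alpha> i)" _ "fst (\<beta> 0)" 0] \<alpha> \<beta> \<open>p \<noteq> 2\<close> by (simp add: Gp_def)
  qed
  moreover have "fst (gmult p \<alpha> \<beta> 0) = 1"
    using \<alpha> \<beta> by (simp add: fst_gmult_0 Gp_def)
  ultimately show ?thesis
    by (simp add: Gp_def)
qed

lemma Xser_Gp: "Xser \<in> Gp p Ahom"
  by (simp add: Gp_def fst_Xser homogeneous_0 homogeneous_1 coeff_deg_def)

lemma gmult_Gp_ev:
  assumes "\<alpha> \<in> Gp_ev p Ahom" "\<beta> \<in> Gp_ev p Ahom"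
  shows "gmult p \<alpha> \<beta> \<in> Gp_ev p Ahom"
proof -
  have central: "central (fst (\<alpha> k))" for k
    using assms(1) Gp_unital_central unital_centralD(2) unfolding Gp_ev_def by blast
  have "snd (gmult p \<alpha> \<beta> i) = 0" for i
    using assms unfolding snd_gmult[OF central] by (simp add: Gp_ev_def)
  then show ?thesis
    using assms gmult_Gp by (simp add: Gp_ev_def)
qed

lemma Xser_Gp_ev: "Xser \<in> Gp_ev p Ahom"
  by (simp add: Gp_ev_def Xser_Gp)

lemma Gpn_coeff_power_eq_0:
  assumes "\<alpha> \<in> Gpn p Ahom n" "1 \<le> k" "n + 1 \<le> k + m"
  shows "fst (\<alpha> k) ^ p ^ m = 0"
proof (cases "k \<le> n")
  case True
  have "central (fst (\<alpha> k))"
    using Gp_unital_central[OF Gpn_Gp[OF assms(1)]] unital_centralD(2) by blast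
  then have "fst (\<alpha> k) ^ p ^ (n - k + 1) = 0"
    using assms(1,2) True dpow_prime_power_eq_0_iff[of "\<alpha> k" "n - k + 1"] by (simp add: Gpn_def)
  moreover have "p ^ (n - k + 1) \<le> p ^ m"
    using assms(3) True prime_gt_0_nat[OF prime_p] by (intro power_increasing) auto
  ultimately show ?thesis
    by (metis le_add_diff_inverse mult_zero_left power_add)
next
  case False
  then show ?thesis
    using assms(1) prime_gt_0_nat[OF prime_p] by (simp add: Gpn_def zero_power)
qed

lemma fst_gmult_Gpn_power_eq_0:
  assumes \<alpha>: "\<alpha> \<in> Gpn p Ahom n" and \<beta>: "\<beta> \<in> Gpn p Ahom n" and i: "1 \<le> i" "i \<le> n"
  shows "fst (gmult p \<alpha> \<beta> i) ^ p ^ (n - i + 1) = 0"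
proof -
  let ?e = "n - i + 1"
  have central: "central (fst (\<alpha> k))" "central (fst (\<beta> k))" for k
    using \<alpha> \<beta> Gp_unital_central Gpn_Gp unital_centralD(2) by blast+
  have "fst (gmult p \<alpha> \<beta> i) ^ p ^ ?e = (\<Sum>j\<le>i. (fst (\<alpha> (i - j)) ^ p ^ j * fst (\<beta> j)) ^ p ^ ?e)"
    unfolding fst_gmult using central
    by (intro frobenius_sum_central[OF prime_p char_p]) (auto intro: central_mult central_power)
  also have "\<dots> = (\<Sum>j\<le>i. fst (\<alpha> (i - j)) ^ p ^ (j + ?e) * fst (\<beta> j) ^ p ^ ?e)"
    using central(1)
    by (simp only: power_mult_central central_power power_mult[symmetric] power_add[symmetric])
  also have "\<dots> = 0"
  proof (intro sum.neutral ballI)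
    fix j
    assume "j \<in> {..i}"
    then consider "j = i" | "j < i"
      by fastforce
    then show "fst (\<alpha> (i - j)) ^ p ^ (j + ?e) * fst (\<beta> j) ^ p ^ ?e = 0"
    proof cases
      case 1
      then show ?thesis
        using Gpn_coeff_power_eq_0[OF \<beta>, of i ?e] i by simp
    next
      case 2
      then show ?thesis
        using Gpn_coeff_power_eq_0[OF \<alpha>, of "i - j" "j + ?e"] i by simp
    qed
  qed
  finally show ?thesis .
qed

lemma gmult_Gpn:
  assumes \<alpha>: "\<alpha> \<in> Gpn p Ahom n" and \<beta>: "\<beta> \<in> Gpn p Ahom n"
  shows "gmult p \<alpha> \<beta> \<in> Gpn p Ahom n"
proof -
  have central: "central (fst (\<alpha> k))" "central (fst (gmult p \<alpha> \<beta> k))" for k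
    using \<alpha> \<beta> Gp_unital_central Gpn_Gp gmult_unital_central unital_centralD(2) by blast+
  have "gmult p \<alpha> \<beta> i = (0, 0)" if "n + 1 \<le> i" for i
  proof -
    have "fst (\<alpha> (i - j)) ^ p ^ j * fst (\<beta> j) = 0 \<and> fst (\<alpha> (i - j)) ^ p ^ j * snd (\<beta> j) = 0" for j
    proof (cases "j \<le> n")
      case True
      then show ?thesis
        using Gpn_coeff_power_eq_0[OF \<alpha>, of "i - j" j] that by simp
    next
      case False
      then show ?thesis
        using \<beta> by (simp add: Gpn_def)
    qed
    moreover have "\<alpha> i = (0, 0)"
      using \<alpha> that by (simp add: Gpn_def)
    ultimately show ?thesis
      by (simp add: prod_eq_iff fst_gmult snd_gmult[OF central(1)])
  qed
  moreover have "dpow (gmult p \<alpha> \<beta> i) (p ^ (n - i + 1)) = (0, 0)" if "1 \<le> i" "i \<le> n" for i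
    using fst_gmult_Gpn_power_eq_0[OF \<alpha> \<beta> that] dpow_prime_power_eq_0_iff[OF central(2), of "n - i + 1"]
    by simp
  ultimately show ?thesis
    using gmult_Gp \<alpha> \<beta> by (simp add: Gpn_def)
qed

lemma Xser_Gpn: "Xser \<in> Gpn p Ahom n"
proof -
  have "dpow (Xser i) (p ^ (n - i + 1)) = ((0, 0) :: 'a \<times> 'a)" if "1 \<le> i" for i
    using that prime_gt_0_nat[OF prime_p] dpow_prime_power_eq_0_iff[of "Xser i" "n - i + 1"]
    by (simp add: fst_Xser zero_power)
  then show ?thesis
    using Xser_Gp by (simp add: Gpn_def Xser_def)
qed

lemma Gpn_filtration_eq_Xser:
  assumes "w \<in> Gpn p Ahom n" "w \<in> filtration (Suc n)"
  shows "w = Xser"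
proof (intro ext prod_eqI)
  fix i
  have w: "w \<in> unital_central"
    using assms(1) Gpn_Gp Gp_unital_central by blast
  have high: "w i = (0, 0)" if "n + 1 \<le> i" for i
    using assms(1) that by (simp add: Gpn_def)
  show "fst (w i) = fst (Xser i)"
    using assms(2) filtration_iff[OF w] unital_centralD(1)[OF w] high[of i]
    by (cases "i = 0"; cases "i \<le> Suc n") (auto simp: fst_Xser)
  show "snd (w i) = snd (Xser i)"
    using assms(2) filtration_iff[OF w] high[of i] by (cases "i < Suc n") auto
qed

lemma Gpn_ev_filtration_eq_Xser:
  assumes "w \<in> Gpn_ev p Ahom n" "w \<in> filtration n"
  shows "w = Xser"
proof (intro ext prod_eqI)
  fix i
  have w: "w \<in> Gpn p Ahom n" "w \<in> unital_central"
    using assms(1) Gpn_Gp Gp_unital_central unfolding Gpn_ev_def by blast+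
  have high: "w i = (0, 0)" if "n + 1 \<le> i" for i
    using w(1) that by (simp add: Gpn_def)
  show "fst (w i) = fst (Xser i)"
    using assms(2) filtration_iff[OF w(2)] unital_centralD(1)[OF w(2)] high[of i]
    by (cases "i = 0"; cases "i \<le> n") (auto simp: fst_Xser)
  show "snd (w i) = snd (Xser i)"
    using assms(1) by (simp add: Gpn_ev_def Gp_ev_def)
qed

lemma group_grp_Gpn:
  assumes "S \<subseteq> Gpn p Ahom n" "Xser \<in> S" "\<And>\<alpha> \<beta>. \<alpha> \<in> S \<Longrightarrow> \<beta> \<in> S \<Longrightarrow> gmult p \<alpha> \<beta> \<in> S"
  shows "group (grp p S)"
proof -
  have S: "S \<subseteq> unital_central"
    using assms(1) Gpn_Gp Gp_unital_central by blast
  have M: "monoid (grp p S)"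
    by (rule monoid_grp[OF S assms(2,3)])
  show ?thesis
  proof (rule monoid.group_if_nat_pow_eq_one[OF M])
    show "0 < p ^ Suc n"
      using prime_gt_0_nat[OF prime_p] by simp
    fix x
    assume x: "x \<in> carrier (grp p S)"
    have "x [^]\<^bsub>grp p S\<^esub> p ^ Suc n \<in> filtration (Suc n)"
      by (rule nat_pow_prime_power_filtration[OF M S]) (use x in simp)
    moreover have "x [^]\<^bsub>grp p S\<^esub> p ^ Suc n \<in> Gpn p Ahom n"
      using monoid.nat_pow_closed[OF M x] assms(1) by auto
    ultimately show "x [^]\<^bsub>grp p S\<^esub> p ^ Suc n = \<one>\<^bsub>grp p S\<^esub>"
      using Gpn_filtration_eq_Xser by simp
  qed
qed

end

end

theorem theorem3p6:
  fixes p n :: nat and Ahom :: "int \<Rightarrow> 'a::ring_1 set"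
  assumes "prime p" and "graded_comm_algebra p Ahom"
  shows "lcs (grp p (Gpn p Ahom n)) (Suc n) = {Xser}
         \<and> (odd p \<longrightarrow> lcs (grp p (Gpn_ev p Ahom n)) n = {Xser})"
proof -
  have char: "of_nat p = (0::'a)"
    using assms(2) by (simp add: graded_comm_algebra_def)
  note graded = assms(1) char assms(2)
  have Gpn: "Gpn p Ahom n \<subseteq> unital_central" "Gpn_ev p Ahom n \<subseteq> Gpn p Ahom n"
    using Gpn_Gp Gp_unital_central[OF graded] unfolding Gpn_ev_def by blast+
  have group: "group (grp p (Gpn p Ahom n))"
    by (rule group_grp_Gpn[OF graded subset_refl Xser_Gpn[OF graded] gmult_Gpn[OF graded]])
  have group_ev: "group (grp p (Gpn_ev p Ahom n))"
    using Xser_Gpn[OF graded] Xser_Gp_ev[OF graded] gmult_Gpn[OF graded] gmult_Gp_ev[OF graded]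
    by (intro group_grp_Gpn[OF graded Gpn(2)]) (auto simp: Gpn_ev_def)
  have "lcs (grp p (Gpn p Ahom n)) (Suc n) \<subseteq> {Xser}"
    using lcs_subset_filtration[OF assms(1) char group Gpn(1)] Gpn_filtration_eq_Xser[OF graded]
    by blast
  moreover have "lcs (grp p (Gpn_ev p Ahom n)) n \<subseteq> {Xser}"
    using lcs_subset_filtration[OF assms(1) char group_ev] Gpn Gpn_ev_filtration_eq_Xser[OF graded]
    by blast
  ultimately show ?thesis
    using one_mem_lcs[OF group, of "Suc n"] one_mem_lcs[OF group_ev, of n]
    unfolding grp_simps by blast
qed

end
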